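(* Let $n,m \in \mathbb{N}$, $a \in \Delta_n^+$, $b \in \Delta_m^+$, and $\lambda > 0$. Define $\Phi_\lambda \colon \mathbb{R}^{n\times m} \to \Pi_{a,b}^+$ by \[ \Phi_\lambda(C) = \operatorname{argmin}_{\pi \in \Pi_{a,b}} \big(\langle C, \pi\rangle + \lambda h(\pi)\big). \] Then for all $C_1, C_2 \in \mathbb{R}^{n\times m}$, \[ \|\Phi_\lambda(C_1) - \Phi_\lambda(C_2)\|_1 \le \frac{\|C_1 - C_2\|_\infty}{\lambda}. \]
   Context: $\Delta_n^+ := \{a \in \mathbb{R}^n : a_i > 0\ \forall i,\ \sum_i a_i = 1\}$. $\Pi_{a,b} := \{\pi \in \mathbb{R}_+^{n\times m} : \pi 1_m = a,\ \pi^\top 1_n = b\}$ and $\Pi_{a,b}^+$ is its subset of matrices with all entries strictly positive. $h(\pi) := \sum_{i,j}\pi_{ij}\log\frac{\pi_{ij}}{e}$ (with $0\log 0=0$); the minimizer defining $\Phi_\lambda(C)$ exists, is unique, and lies in $\Pi_{a,b}^+$. $\langle\cdot,\cdot\rangle$ is the Frobenius inner product; for a matrix $A$, $\|A\|_1 := \sum_{i,j}|A_{ij}|$ and $\|A\|_\infty := \max_{i,j}|A_{ij}|$. *)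

theory Defs
  imports Complex_Main
begin

definition pos_simplex :: "('i::finite \<Rightarrow> real) set" where
  "pos_simplex = {a. (\<forall>i. a i > 0) \<and> (\<Sum>i\<in>UNIV. a i) = 1}"

definition transport_polytope ::
  "('n::finite \<Rightarrow> real) \<Rightarrow> ('m::finite \<Rightarrow> real) \<Rightarrow> ('n \<Rightarrow> 'm \<Rightarrow> real) set" where
  "transport_polytope a b = {p. (\<forall>i j. p i j \<ge> 0) \<and>
      (\<forall>i. (\<Sum>j\<in>UNIV. p i j) = a i) \<and> (\<forall>j. (\<Sum>i\<in>UNIV. p i j) = b j)}"

definition neg_entropy :: "('n::finite \<Rightarrow> 'm::finite \<Rightarrow> real) \<Rightarrow> real" where
  "neg_entropy p = (\<Sum>i\<in>UNIV. \<Sum>j\<in>UNIV. if p i j = 0 then 0 else p i j * ln (p i j / exp 1))"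

definition frob_inner :: "('n::finite \<Rightarrow> 'm::finite \<Rightarrow> real) \<Rightarrow> ('n \<Rightarrow> 'm \<Rightarrow> real) \<Rightarrow> real" where
  "frob_inner A B = (\<Sum>i\<in>UNIV. \<Sum>j\<in>UNIV. A i j * B i j)"

definition mat_norm1 :: "('n::finite \<Rightarrow> 'm::finite \<Rightarrow> real) \<Rightarrow> real" where
  "mat_norm1 A = (\<Sum>i\<in>UNIV. \<Sum>j\<in>UNIV. \<bar>A i j\<bar>)"

definition mat_norm_inf :: "('n::finite \<Rightarrow> 'm::finite \<Rightarrow> real) \<Rightarrow> real" where
  "mat_norm_inf A = Max {\<bar>A i j\<bar> | i j. True}"

definition Phi ::
  "real \<Rightarrow> ('n::finite \<Rightarrow> real) \<Rightarrow> ('m::finite \<Rightarrow> real) \<Rightarrow> ('n \<Rightarrow> 'm \<Rightarrow> real) \<Rightarrow> ('n \<Rightarrow> 'm \<Rightarrow> real)" where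
  "Phi lam a b C = (THE p. p \<in> transport_polytope a b \<and>
      (\<forall>q\<in>transport_polytope a b.
         frob_inner C p + lam * neg_entropy p \<le> frob_inner C q + lam * neg_entropy q))"

end

theory Submission
  imports Defs "HOL-Analysis.Analysis" "HOL-Real_Asymp.Real_Asymp"
begin

(* The objective <C, p> + lam h(p) has a strictly positive minimiser p_C: at a zero entry the
   derivative of the entropy in the direction of the positive plan a b^T is -infinity.
   Hence p_C satisfies the variational inequality <C + lam ln p_C, q - p_C> >= 0 for every
   feasible q. Adding the inequalities for (C1, p1) and (C2, p2), each tested at the other
   minimiser, gives
     lam <ln p1 - ln p2, p1 - p2> <= <C1 - C2, p2 - p1> <= ||C1 - C2||_inf ||p1 - p2||_1,
   and the symmetrised Kullback-Leibler divergence on the left dominates ||p1 - p2||_1^2, by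
   (ln x - ln y)(x - y) >= 2 (x - y)^2 / (x + y) and Cauchy-Schwarz with weights (p1 + p2)/2.
   Taking C1 = C2 also yields the uniqueness of the minimiser that the definition of Phi
   presupposes. *)

lemma xlnx_tangent_le:
  fixes x y :: real
  assumes "0 < x" and "0 \<le> y"
  shows "x * ln x - x + ln x * (y - x) \<le> y * ln y - y"
proof (cases "y = 0")
  case True
  then show ?thesis using \<open>0 < x\<close> by (simp add: algebra_simps)
next
  case False
  with \<open>0 \<le> y\<close> have "0 < y" by simp
  have "y * ln (x / y) \<le> y * (x / y - 1)"
    using \<open>0 < x\<close> \<open>0 < y\<close> by (intro mult_left_mono ln_le_minus_one) auto
  also have "y * ln (x / y) = y * ln x - y * ln y"
    using \<open>0 < x\<close> \<open>0 < y\<close> by (simp add: ln_div right_diff_distrib)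
  also have "y * (x / y - 1) = x - y"
    using \<open>0 < y\<close> by (simp add: right_diff_distrib)
  finally show ?thesis by (simp add: algebra_simps)
qed

lemma ln_minus_harmonic_mono:
  fixes x y :: real
  assumes "0 < x" and "x \<le> y"
  shows "ln x - 2 * (x - 1) / (x + 1) \<le> ln y - 2 * (y - 1) / (y + 1)"
proof (rule DERIV_nonneg_imp_increasing_open[OF \<open>x \<le> y\<close>])
  fix s :: real assume s: "x < s" "s < y"
  have "DERIV (\<lambda>t. ln t - 2 * (t - 1) / (t + 1)) s :> 1 / s - 4 / ((s + 1) * (s + 1))"
    using s \<open>0 < x\<close> by (auto intro!: derivative_eq_intros)
  moreover have "4 / ((s + 1) * (s + 1)) \<le> 1 / s"
  proof -
    have "0 \<le> (s - 1) * (s - 1)" by simp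
    then show ?thesis using s \<open>0 < x\<close> by (simp add: divide_simps algebra_simps)
  qed
  ultimately show "\<exists>d. DERIV (\<lambda>t. ln t - 2 * (t - 1) / (t + 1)) s :> d \<and> 0 \<le> d"
    by fastforce
qed (use assms in \<open>auto intro!: continuous_intros\<close>)

lemma ln_times_diff_ge:
  fixes t :: real
  assumes "0 < t"
  shows "2 * (t - 1)\<^sup>2 / (t + 1) \<le> ln t * (t - 1)"
proof -
  have "2 * (t - 1)\<^sup>2 / (t + 1) = 2 * (t - 1) / (t + 1) * (t - 1)"
    by (simp add: power2_eq_square)
  also have "\<dots> \<le> ln t * (t - 1)"
  proof (cases "1 \<le> t")
    case True
    then show ?thesis
      using ln_minus_harmonic_mono[of 1 t] by (intro mult_right_mono) auto
  next
    case False
    then show ?thesis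
      using ln_minus_harmonic_mono[of t 1] assms by (intro mult_right_mono_neg) auto
  qed
  finally show ?thesis .
qed

lemma sym_kl_term_ge:
  fixes p q :: real
  assumes "0 < p" and "0 < q"
  shows "2 * (p - q)\<^sup>2 / (p + q) \<le> (ln p - ln q) * (p - q)"
proof -
  define t where "t = p / q"
  have "0 < t" and p: "p = q * t" using assms by (simp_all add: t_def)
  have "2 * (p - q)\<^sup>2 / (p + q) = 2 * (q * (t - 1))\<^sup>2 / (q * (t + 1))"
    by (simp add: p algebra_simps)
  also have "\<dots> = q * (2 * (t - 1)\<^sup>2 / (t + 1))"
    using assms by (simp add: power_mult_distrib power2_eq_square)
  also have "\<dots> \<le> q * (ln t * (t - 1))"
    using ln_times_diff_ge[OF \<open>0 < t\<close>] assms by (intro mult_left_mono) auto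
  also have "\<dots> = (ln p - ln q) * (p - q)"
    using assms \<open>0 < t\<close> by (simp add: p ln_mult algebra_simps)
  finally show ?thesis .
qed

lemma ln_segment_mult_le:
  fixes p u t :: real
  assumes "0 \<le> p" "p \<le> 1" "0 < u" "u \<le> 1" "0 < t" "t \<le> 1"
  shows "ln (p + t * (u - p)) * (u - p) \<le> \<bar>ln u * (u - p)\<bar>"
proof (cases "p \<le> u")
  case True
  have mix: "p + t * (u - p) = (1 - t) * p + t * u" by (simp add: algebra_simps)
  have "(1 - t) * p + t * u \<le> (1 - t) * 1 + t * 1"
    using assms by (intro add_mono mult_left_mono) auto
  moreover have "0 < (1 - t) * p + t * u"
    using assms by (intro add_nonneg_pos) auto
  ultimately have "ln (p + t * (u - p)) \<le> 0" unfolding mix by simp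
  then show ?thesis using True by (simp add: mult_nonpos_nonneg order.trans[OF _ abs_ge_zero])
next
  case False
  then have "(1 - t) * (u - p) \<le> 0"
    using \<open>t \<le> 1\<close> by (simp add: mult_nonneg_nonpos)
  then have "u \<le> p + t * (u - p)" by (simp add: algebra_simps)
  then have "ln u \<le> ln (p + t * (u - p))" using \<open>0 < u\<close> by simp
  then have "ln (p + t * (u - p)) * (u - p) \<le> ln u * (u - p)"
    using False by (intro mult_right_mono_neg) auto
  then show ?thesis by linarith
qed

lemma ex_ln_mult_below:
  fixes B c u :: real
  assumes "0 < c" and "0 < u"
  obtains t where "0 < t" "t \<le> 1" "B + c * ln (t * u) < 0"
proof
  define t where "t = min 1 (exp (- B / c - 1) / u)"
  show "0 < t" "t \<le> 1" using assms by (auto simp: t_def)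
  have "t * u \<le> exp (- B / c - 1)" using assms by (simp add: t_def min_def field_simps)
  then have "ln (t * u) \<le> ln (exp (- B / c - 1))"
    using assms \<open>0 < t\<close> by (subst ln_le_cancel_iff) auto
  then have "ln (t * u) \<le> - B / c - 1" by simp
  then have "c * ln (t * u) \<le> c * (- B / c - 1)" using assms by (intro mult_left_mono) auto
  also have "c * (- B / c - 1) = - B - c" using assms by (simp add: field_simps)
  finally show "B + c * ln (t * u) < 0" using assms by simp
qed

lemma sum_abs_diff_sq_le_sym_kl:
  fixes p q :: "'k::finite \<Rightarrow> real"
  assumes "\<And>k. 0 < p k" and "\<And>k. 0 < q k"
    and "(\<Sum>k\<in>UNIV. p k) = 1" and "(\<Sum>k\<in>UNIV. q k) = 1"
  shows "(\<Sum>k\<in>UNIV. \<bar>p k - q k\<bar>)\<^sup>2 \<le> (\<Sum>k\<in>UNIV. (ln (p k) - ln (q k)) * (p k - q k))"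
proof -
  define s where "s k = (p k + q k) / 2" for k
  have s_pos: "0 < s k" for k using assms(1,2)[of k] by (simp add: s_def)
  have "(\<Sum>k\<in>UNIV. \<bar>p k - q k\<bar>)\<^sup>2 = (\<Sum>k\<in>UNIV. \<bar>p k - q k\<bar> / sqrt (s k) * sqrt (s k))\<^sup>2"
    using s_pos by (simp add: less_imp_neq[symmetric])
  also have "\<dots> \<le> (\<Sum>k\<in>UNIV. (\<bar>p k - q k\<bar> / sqrt (s k))\<^sup>2) * (\<Sum>k\<in>UNIV. (sqrt (s k))\<^sup>2)"
    by (rule Cauchy_Schwarz_ineq_sum)
  also have "\<dots> = (\<Sum>k\<in>UNIV. 2 * (p k - q k)\<^sup>2 / (p k + q k))"
    using s_pos assms
    by (simp add: less_imp_le power_divide s_def sum.distrib mult.commute flip: sum_divide_distrib)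
  also have "\<dots> \<le> (\<Sum>k\<in>UNIV. (ln (p k) - ln (q k)) * (p k - q k))"
    using assms by (intro sum_mono sym_kl_term_ge)
  finally show ?thesis .
qed

lemma sum_mult_le_bound_sum_abs:
  fixes c d :: "'k \<Rightarrow> real"
  assumes "\<And>k. k \<in> A \<Longrightarrow> \<bar>c k\<bar> \<le> M"
  shows "(\<Sum>k\<in>A. c k * d k) \<le> M * (\<Sum>k\<in>A. \<bar>d k\<bar>)"
proof -
  have "c k * d k \<le> M * \<bar>d k\<bar>" if "k \<in> A" for k
    using assms[OF that] abs_ge_self[of "c k * d k"]
    by (metis abs_ge_zero abs_mult mult_right_mono order_trans)
  then show ?thesis by (simp add: sum_distrib_left sum_mono)
qed

section \<open>Entropic programs over probability vectors\<close>

definition prob_vectors :: "('k::finite \<Rightarrow> real) set" where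
  "prob_vectors = {x. (\<forall>k. 0 \<le> x k) \<and> (\<Sum>k\<in>UNIV. x k) = 1}"

lemma prob_vectors_le_one:
  assumes "x \<in> prob_vectors"
  shows "x k \<le> 1"
proof -
  have "x k \<le> (\<Sum>k\<in>UNIV. x k)"
    using assms by (intro member_le_sum) (auto simp: prob_vectors_def)
  then show ?thesis using assms by (simp add: prob_vectors_def)
qed

text \<open>As \<open>ln 0 = 0\<close> in Isabelle, the summand \<open>x * ln x - x\<close> is the entropy term
  \<open>x log (x / e)\<close> with \<open>0 log 0 = 0\<close> also at \<open>x = 0\<close>.\<close>

definition entropic_cost :: "real \<Rightarrow> ('k::finite \<Rightarrow> real) \<Rightarrow> ('k \<Rightarrow> real) \<Rightarrow> real" where
  "entropic_cost lam C x = (\<Sum>k\<in>UNIV. C k * x k + lam * (x k * ln (x k) - x k))"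

lemma continuous_on_xlnx: "continuous_on {0..} (\<lambda>x::real. x * ln x - x)"
  unfolding continuous_on_eq_continuous_within
proof
  fix x :: real assume "x \<in> {0..}"
  show "continuous (at x within {0..}) (\<lambda>x. x * ln x - x)"
  proof (cases "x = 0")
    case True
    have "((\<lambda>x::real. x * ln x - x) \<longlongrightarrow> 0) (at_right 0)" by real_asymp
    then show ?thesis using True by (simp add: continuous_within at_within_Ici_at_right)
  next
    case False
    with \<open>x \<in> {0..}\<close> have "isCont (\<lambda>x. x * ln x - x) x"
      by (auto intro!: continuous_intros)
    then show ?thesis by (rule continuous_at_imp_continuous_at_within)
  qed
qed

lemma entropic_cost_argmin_exists:
  assumes "compact K" and "K \<noteq> {}" and "\<And>x k. x \<in> K \<Longrightarrow> 0 \<le> x k"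
  shows "\<exists>p. is_arg_min (entropic_cost lam C) (\<lambda>x. x \<in> K) p"
proof -
  have coord: "continuous_on K (\<lambda>x. x k)" for k
    by (rule continuous_on_subset[OF continuous_on_product_coordinates]) simp
  have "continuous_on K (\<lambda>x. x k * ln (x k) - x k)" for k
    using assms(3) by (intro continuous_on_compose2[OF continuous_on_xlnx coord]) auto
  then have "continuous_on K (\<lambda>x. C k * x k + lam * (x k * ln (x k) - x k))" for k
    by (intro continuous_on_add continuous_on_mult continuous_on_const coord)
  then have "continuous_on K (entropic_cost lam C)"
    unfolding entropic_cost_def by (rule continuous_on_sum)
  then obtain p where "p \<in> K" and "\<forall>y\<in>K. entropic_cost lam C p \<le> entropic_cost lam C y"
    using continuous_attains_inf[OF assms(1,2)] by blast
  then show ?thesis by (auto simp: is_arg_min_linorder)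
qed

locale entropic_program =
  fixes K :: "('k::finite \<Rightarrow> real) set" and lam :: real
  assumes K_prob: "K \<subseteq> prob_vectors"
    and K_segment: "\<And>x y t. \<lbrakk>x \<in> K; y \<in> K; 0 \<le> t; t \<le> 1\<rbrakk>
      \<Longrightarrow> (\<lambda>k. x k + t * (y k - x k)) \<in> K"
    and K_positive: "\<exists>u\<in>K. \<forall>k. 0 < u k"
    and lam_pos: "0 < lam"
begin

abbreviation minimizer :: "('k \<Rightarrow> real) \<Rightarrow> ('k \<Rightarrow> real) \<Rightarrow> bool" where
  "minimizer C p \<equiv> is_arg_min (entropic_cost lam C) (\<lambda>x. x \<in> K) p"

lemma K_nonneg: "x \<in> K \<Longrightarrow> 0 \<le> x k"
  using K_prob by (auto simp: prob_vectors_def)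

lemma K_le_one: "x \<in> K \<Longrightarrow> x k \<le> 1"
  using K_prob prob_vectors_le_one by blast

lemma K_sum: "x \<in> K \<Longrightarrow> (\<Sum>k\<in>UNIV. x k) = 1"
  using K_prob by (auto simp: prob_vectors_def)

lemma minimizer_slope_nonneg:
  assumes "minimizer C p" and "q \<in> K" and "0 < t" and "t \<le> 1"
    and r_pos: "\<And>k. 0 < p k + t * (q k - p k)"
  shows "0 \<le> (\<Sum>k\<in>UNIV. (C k + lam * ln (p k + t * (q k - p k))) * (q k - p k))"
    (is "0 \<le> ?slope")
proof -
  define r where "r k = p k + t * (q k - p k)" for k
  have "p \<in> K" using assms(1) by (simp add: is_arg_min_def)
  then have "r \<in> K" unfolding r_def using assms(2-4) by (intro K_segment) auto
  then have "entropic_cost lam C p \<le> entropic_cost lam C r"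
    using assms(1) by (simp add: is_arg_min_linorder)
  also have "\<dots> \<le> entropic_cost lam C p + t * ?slope"
  proof -
    have "C k * r k + lam * (r k * ln (r k) - r k)
        \<le> C k * p k + lam * (p k * ln (p k) - p k) + t * ((C k + lam * ln (r k)) * (q k - p k))"
      for k
    proof -
      have "r k * ln (r k) - r k + ln (r k) * (p k - r k) \<le> p k * ln (p k) - p k"
        using r_pos \<open>p \<in> K\<close> by (intro xlnx_tangent_le) (auto simp: r_def K_nonneg)
      then have "lam * (r k * ln (r k) - r k)
          \<le> lam * (p k * ln (p k) - p k + t * (ln (r k) * (q k - p k)))"
        using lam_pos by (intro mult_left_mono) (auto simp: r_def algebra_simps)
      then show ?thesis by (simp add: r_def algebra_simps)
    qed
    then have "entropic_cost lam C r
        \<le> (\<Sum>k\<in>UNIV. C k * p k + lam * (p k * ln (p k) - p k)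
              + t * ((C k + lam * ln (r k)) * (q k - p k)))"
      unfolding entropic_cost_def by (rule sum_mono)
    then show ?thesis
      by (simp add: entropic_cost_def r_def sum.distrib sum_distrib_left)
  qed
  finally show ?thesis using \<open>0 < t\<close> by (simp add: zero_le_mult_iff)
qed

lemma minimizer_pos:
  assumes "minimizer C p"
  shows "0 < p k"
proof (rule ccontr)
  assume "\<not> 0 < p k"
  have "p \<in> K" using assms by (simp add: is_arg_min_def)
  then have "p k = 0" using \<open>\<not> 0 < p k\<close> K_nonneg[of p k] by simp
  obtain u where "u \<in> K" and u_pos: "\<And>k. 0 < u k" using K_positive by blast
  \<comment> \<open>bounds the slope towards \<open>u\<close> uniformly in \<open>t\<close>, except for the term
     \<open>lam * u k * ln (t * u k)\<close> of the zero entry, which tends to \<open>-\<infinity>\<close>\<close>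
  define B where
    "B = (\<Sum>k'\<in>UNIV. \<bar>C k' * (u k' - p k')\<bar> + lam * \<bar>ln (u k') * (u k' - p k')\<bar>)"
  obtain t where "0 < t" "t \<le> 1" and t_small: "B + lam * u k * ln (t * u k) < 0"
    using ex_ln_mult_below[of "lam * u k" "u k" B] lam_pos u_pos by (auto simp: mult.assoc)
  have r_pos: "0 < p k' + t * (u k' - p k')" for k'
  proof -
    have "0 < (1 - t) * p k' + t * u k'"
      using \<open>p \<in> K\<close> \<open>t \<le> 1\<close> \<open>0 < t\<close> u_pos by (intro add_nonneg_pos) (auto simp: K_nonneg)
    then show ?thesis by (simp add: algebra_simps)
  qed
  have "(C k' + lam * ln (p k' + t * (u k' - p k'))) * (u k' - p k')
      \<le> \<bar>C k' * (u k' - p k')\<bar> + lam * \<bar>ln (u k') * (u k' - p k')\<bar>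
         + (if k' = k then lam * u k * ln (t * u k) else 0)" for k'
  proof (cases "k' = k")
    case True
    have "C k * u k \<le> \<bar>C k * u k\<bar> + lam * \<bar>ln (u k) * u k\<bar>"
      using lam_pos by (intro add_increasing2) auto
    then show ?thesis using True \<open>p k = 0\<close> by (simp add: algebra_simps)
  next
    case False
    have "ln (p k' + t * (u k' - p k')) * (u k' - p k') \<le> \<bar>ln (u k') * (u k' - p k')\<bar>"
      using \<open>p \<in> K\<close> \<open>u \<in> K\<close> \<open>0 < t\<close> \<open>t \<le> 1\<close> u_pos
      by (intro ln_segment_mult_le) (auto simp: K_nonneg K_le_one)
    then have "lam * (ln (p k' + t * (u k' - p k')) * (u k' - p k'))
        \<le> lam * \<bar>ln (u k') * (u k' - p k')\<bar>"
      using lam_pos by (intro mult_left_mono) auto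
    then show ?thesis using False by (simp add: distrib_right abs_ge_self add_mono)
  qed
  then have "(\<Sum>k'\<in>UNIV. (C k' + lam * ln (p k' + t * (u k' - p k'))) * (u k' - p k'))
      \<le> (\<Sum>k'\<in>UNIV. \<bar>C k' * (u k' - p k')\<bar> + lam * \<bar>ln (u k') * (u k' - p k')\<bar>
         + (if k' = k then lam * u k * ln (t * u k) else 0))"
    by (rule sum_mono)
  also have "\<dots> = B + lam * u k * ln (t * u k)"
    unfolding B_def by (simp add: sum.distrib)
  finally have "(\<Sum>k'\<in>UNIV. (C k' + lam * ln (p k' + t * (u k' - p k'))) * (u k' - p k'))
      \<le> B + lam * u k * ln (t * u k)" .
  moreover have "0 \<le> (\<Sum>k'\<in>UNIV. (C k' + lam * ln (p k' + t * (u k' - p k'))) * (u k' - p k'))"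
    using assms \<open>u \<in> K\<close> \<open>0 < t\<close> \<open>t \<le> 1\<close> r_pos by (rule minimizer_slope_nonneg)
  ultimately show False using t_small by linarith
qed

lemma minimizer_variational_ineq:
  assumes "minimizer C p" and "q \<in> K"
  shows "0 \<le> (\<Sum>k\<in>UNIV. (C k + lam * ln (p k)) * (q k - p k))"
proof -
  define slope where
    "slope t = (\<Sum>k\<in>UNIV. (C k + lam * ln (p k + t * (q k - p k))) * (q k - p k))" for t
  have lim: "(slope \<longlongrightarrow> slope 0) (at_right 0)"
    unfolding slope_def using minimizer_pos[OF assms(1)]
    by (intro tendsto_intros) (auto simp: less_imp_neq[symmetric])
  have ev: "\<forall>\<^sub>F t in at_right 0. 0 \<le> slope t"
    unfolding eventually_at_right_field
  proof (intro exI[of _ 1] conjI allI impI)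
    fix t :: real assume t: "0 < t" "t < 1"
    have "0 < p k + t * (q k - p k)" for k
    proof -
      have "0 < (1 - t) * p k + t * q k"
        using t assms minimizer_pos[OF assms(1)] by (intro add_pos_nonneg) (auto simp: K_nonneg)
      then show ?thesis by (simp add: algebra_simps)
    qed
    then show "0 \<le> slope t"
      unfolding slope_def using assms t by (intro minimizer_slope_nonneg) auto
  qed simp
  have "0 \<le> slope 0"
    using tendsto_lowerbound[OF lim ev trivial_limit_at_right_real] by simp
  then show ?thesis by (simp add: slope_def)
qed

lemma minimizer_lipschitz:
  assumes "minimizer C1 p1" and "minimizer C2 p2" and "\<And>k. \<bar>C1 k - C2 k\<bar> \<le> M"
  shows "lam * (\<Sum>k\<in>UNIV. \<bar>p1 k - p2 k\<bar>) \<le> M"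
proof -
  define D where "D = (\<Sum>k\<in>UNIV. \<bar>p1 k - p2 k\<bar>)"
  have "p1 \<in> K" "p2 \<in> K" using assms(1,2) by (simp_all add: is_arg_min_def)
  have "0 \<le> (\<Sum>k\<in>UNIV. (C1 k + lam * ln (p1 k)) * (p2 k - p1 k))
          + (\<Sum>k\<in>UNIV. (C2 k + lam * ln (p2 k)) * (p1 k - p2 k))"
    using minimizer_variational_ineq[OF assms(1) \<open>p2 \<in> K\<close>]
      minimizer_variational_ineq[OF assms(2) \<open>p1 \<in> K\<close>] by linarith
  also have "\<dots> = (\<Sum>k\<in>UNIV. (C1 k - C2 k) * (p2 k - p1 k))
      - lam * (\<Sum>k\<in>UNIV. (ln (p1 k) - ln (p2 k)) * (p1 k - p2 k))"
    by (simp add: sum_distrib_left algebra_simps flip: sum.distrib sum_subtractf)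
  finally have vi: "lam * (\<Sum>k\<in>UNIV. (ln (p1 k) - ln (p2 k)) * (p1 k - p2 k))
      \<le> (\<Sum>k\<in>UNIV. (C1 k - C2 k) * (p2 k - p1 k))" by simp
  have "lam * D\<^sup>2 \<le> lam * (\<Sum>k\<in>UNIV. (ln (p1 k) - ln (p2 k)) * (p1 k - p2 k))"
    unfolding D_def using \<open>p1 \<in> K\<close> \<open>p2 \<in> K\<close> assms(1,2) lam_pos
    by (intro mult_left_mono sum_abs_diff_sq_le_sym_kl minimizer_pos K_sum) auto
  also have "\<dots> \<le> (\<Sum>k\<in>UNIV. (C1 k - C2 k) * (p2 k - p1 k))" by (rule vi)
  also have "\<dots> \<le> M * D"
    using sum_mult_le_bound_sum_abs[of UNIV "\<lambda>k. C1 k - C2 k" M "\<lambda>k. p2 k - p1 k"] assms(3)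
    by (simp add: D_def abs_minus_commute)
  finally have "D * (lam * D) \<le> D * M" by (simp add: power2_eq_square algebra_simps)
  moreover have "0 \<le> M" using assms(3) abs_ge_zero order_trans by blast
  moreover have "0 \<le> D" unfolding D_def by (simp add: sum_nonneg)
  ultimately show ?thesis
    using lam_pos by (cases "D = 0") (auto simp: D_def[symmetric] mult_le_cancel_left)
qed

lemma minimizer_unique:
  assumes "minimizer C p1" and "minimizer C p2"
  shows "p1 = p2"
proof
  fix k
  have "lam * (\<Sum>k\<in>UNIV. \<bar>p1 k - p2 k\<bar>) \<le> 0"
    using assms by (intro minimizer_lipschitz) auto
  then have "(\<Sum>k\<in>UNIV. \<bar>p1 k - p2 k\<bar>) = 0"
    using lam_pos by (intro antisym) (auto simp: mult_le_0_iff sum_nonneg)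
  then show "p1 k = p2 k" by (simp add: sum_nonneg_eq_0_iff)
qed

end

section \<open>Entropic optimal transport\<close>

definition flat_transport_polytope ::
  "('n::finite \<Rightarrow> real) \<Rightarrow> ('m::finite \<Rightarrow> real) \<Rightarrow> ('n \<times> 'm \<Rightarrow> real) set" where
  "flat_transport_polytope a b = {x. curry x \<in> transport_polytope a b}"

lemma sum_UNIV_prod:
  fixes f :: "'n::finite \<times> 'm::finite \<Rightarrow> 'a::comm_monoid_add"
  shows "(\<Sum>k\<in>UNIV. f k) = (\<Sum>i\<in>UNIV. \<Sum>j\<in>UNIV. f (i, j))"
  by (simp add: sum.cartesian_product)

lemma compact_flat_transport_polytope: "compact (flat_transport_polytope a b)"
proof -
  have "compactin (product_topology (\<lambda>_. euclidean) UNIV) (Pi\<^sub>E UNIV (\<lambda>k. {0..a (fst k)}))"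
    by (simp add: compactin_PiE)
  then have box: "compact (Pi\<^sub>E UNIV (\<lambda>k. {0..a (fst k)}))"
    by (simp add: euclidean_product_topology)
  have coord: "continuous_on UNIV (\<lambda>x. x k)" for k :: "'a \<times> 'b"
    by (rule continuous_on_product_coordinates)
  have "closed (flat_transport_polytope a b)"
    unfolding flat_transport_polytope_def transport_polytope_def curry_def mem_Collect_eq
    by (intro closed_Collect_conj closed_Collect_all closed_Collect_le closed_Collect_eq
        continuous_on_sum continuous_on_const coord)
  moreover have "flat_transport_polytope a b \<subseteq> Pi\<^sub>E UNIV (\<lambda>k. {0..a (fst k)})"
  proof
    fix x assume x: "x \<in> flat_transport_polytope a b"
    have "x (i, j) \<le> a i" for i j
    proof -
      have "x (i, j) \<le> (\<Sum>j\<in>UNIV. x (i, j))"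
        using x by (intro member_le_sum)
          (auto simp: flat_transport_polytope_def transport_polytope_def)
      then show ?thesis using x by (simp add: flat_transport_polytope_def transport_polytope_def)
    qed
    then show "x \<in> Pi\<^sub>E UNIV (\<lambda>k. {0..a (fst k)})"
      using x by (auto simp: flat_transport_polytope_def transport_polytope_def)
  qed
  ultimately show ?thesis by (metis compact_Int_closed[OF box] inf.absorb_iff2)
qed

lemma entropic_program_flat_transport_polytope:
  assumes "a \<in> pos_simplex" and "b \<in> pos_simplex" and "0 < lam"
  shows "entropic_program (flat_transport_polytope a b) lam"
proof
  show "flat_transport_polytope a b \<subseteq> prob_vectors"
    using assms(1)
    by (auto simp: flat_transport_polytope_def transport_polytope_def prob_vectors_def
        pos_simplex_def sum_UNIV_prod)
  show "(\<lambda>k. x k + t * (y k - x k)) \<in> flat_transport_polytope a b"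
    if "x \<in> flat_transport_polytope a b" "y \<in> flat_transport_polytope a b" "0 \<le> t" "t \<le> 1"
    for x y t
  proof -
    have "0 \<le> (1 - t) * x (i, j) + t * y (i, j)" for i j
      using that by (intro add_nonneg_nonneg mult_nonneg_nonneg)
        (auto simp: flat_transport_polytope_def transport_polytope_def)
    then show ?thesis
      using that by (auto simp: flat_transport_polytope_def transport_polytope_def algebra_simps
          sum.distrib sum_subtractf simp flip: sum_distrib_left)
  qed
  show "\<exists>u\<in>flat_transport_polytope a b. \<forall>k. 0 < u k"
  proof
    show "(\<lambda>(i, j). a i * b j) \<in> flat_transport_polytope a b"
      using assms(1,2)
      by (auto simp: flat_transport_polytope_def transport_polytope_def pos_simplex_def less_imp_le
          simp flip: sum_distrib_left sum_distrib_right)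
    show "\<forall>k. 0 < (case k of (i, j) \<Rightarrow> a i * b j)"
      using assms(1,2) by (auto simp: pos_simplex_def)
  qed
qed (fact assms(3))

lemma transport_cost_eq_entropic_cost:
  assumes "p \<in> transport_polytope a b"
  shows "frob_inner C p + lam * neg_entropy p = entropic_cost lam (case_prod C) (case_prod p)"
proof -
  have "(if p i j = 0 then 0 else p i j * ln (p i j / exp 1)) = p i j * ln (p i j) - p i j" for i j
    using assms by (auto simp: transport_polytope_def ln_div algebra_simps less_le)
  then show ?thesis
    by (simp add: frob_inner_def neg_entropy_def entropic_cost_def sum_UNIV_prod
        sum.distrib sum_distrib_left)
qed

lemma is_arg_min_transport_iff:
  "is_arg_min (\<lambda>p. frob_inner C p + lam * neg_entropy p) (\<lambda>p. p \<in> transport_polytope a b) p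
   \<longleftrightarrow> is_arg_min (entropic_cost lam (case_prod C)) (\<lambda>x. x \<in> flat_transport_polytope a b)
         (case_prod p)"
proof -
  have "(\<forall>x. x \<in> flat_transport_polytope a b \<longrightarrow> Q x)
      \<longleftrightarrow> (\<forall>q\<in>transport_polytope a b. Q (case_prod q))" for Q
    by (metis case_prod_curry curry_case_prod flat_transport_polytope_def mem_Collect_eq)
  then show ?thesis
    by (auto simp: is_arg_min_linorder flat_transport_polytope_def transport_cost_eq_entropic_cost)
qed

lemma abs_le_mat_norm_inf: "\<bar>A i j\<bar> \<le> mat_norm_inf A"
proof -
  have "finite {\<bar>A i j\<bar> | i j. True}"
    by (rule finite_subset[of _ "(\<lambda>(i, j). \<bar>A i j\<bar>) ` UNIV"]) auto
  then show ?thesis unfolding mat_norm_inf_def by (rule Max_ge) auto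
qed

lemma Phi_is_arg_min:
  assumes "a \<in> pos_simplex" and "b \<in> pos_simplex" and "0 < lam"
  shows "is_arg_min (\<lambda>p. frob_inner C p + lam * neg_entropy p) (\<lambda>p. p \<in> transport_polytope a b)
           (Phi lam a b C)"
proof -
  interpret entropic_program "flat_transport_polytope a b" lam
    using assms by (rule entropic_program_flat_transport_polytope)
  obtain x where "minimizer (case_prod C) x"
    using entropic_cost_argmin_exists[OF compact_flat_transport_polytope] K_positive K_nonneg
    by blast
  then have "\<exists>!p. is_arg_min (\<lambda>p. frob_inner C p + lam * neg_entropy p)
                 (\<lambda>p. p \<in> transport_polytope a b) p"
    unfolding is_arg_min_transport_iff
    by (metis case_prod_curry curry_case_prod minimizer_unique)
  then show ?thesis
    unfolding Phi_def is_arg_min_linorder Ball_def by (rule theI')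
qed

theorem lemma1:
  fixes a :: "'n::finite \<Rightarrow> real" and b :: "'m::finite \<Rightarrow> real"
    and lam :: real and C1 C2 :: "'n \<Rightarrow> 'm \<Rightarrow> real"
  assumes "a \<in> pos_simplex" and "b \<in> pos_simplex" and "lam > 0"
  shows "mat_norm1 (\<lambda>i j. Phi lam a b C1 i j - Phi lam a b C2 i j)
           \<le> mat_norm_inf (\<lambda>i j. C1 i j - C2 i j) / lam"
proof -
  interpret entropic_program "flat_transport_polytope a b" lam
    using assms by (rule entropic_program_flat_transport_polytope)
  have min: "minimizer (case_prod C) (case_prod (Phi lam a b C))" for C
    using Phi_is_arg_min[OF assms] is_arg_min_transport_iff by blast
  have bound: "\<bar>case_prod C1 k - case_prod C2 k\<bar> \<le> mat_norm_inf (\<lambda>i j. C1 i j - C2 i j)" for k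
    using abs_le_mat_norm_inf[of "\<lambda>i j. C1 i j - C2 i j"] by (cases k) simp
  have "lam * (\<Sum>k\<in>UNIV. \<bar>case_prod (Phi lam a b C1) k - case_prod (Phi lam a b C2) k\<bar>)
        \<le> mat_norm_inf (\<lambda>i j. C1 i j - C2 i j)"
    by (rule minimizer_lipschitz[OF min[of C1] min[of C2] bound])
  then show ?thesis
    using assms(3) by (simp add: mat_norm1_def sum_UNIV_prod field_simps)
qed

end
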